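(* Assume the setting described in the context. Let $U$ be a bounded open subset of $\mathbb C$ with $\overline U\subset\mathcal O_\rho$. Then there exist constants $C,c>0$ such that for all $z\in U$, all $\vec e\in\mathbb C^d$ and all $j,j_0\in\mathbb Z$, $$|W(z,j_0,j,\vec e)|\le C|\vec e|e^{-c|j-j_0|}.$$
   Context: Let $d,p,q\ge1$ be integers and $\boldsymbol\nu>0$. Let $F(\nu;u_{-p},\dots,u_{q-1})\in\mathbb R^d$ be a $C^1$ numerical flux on an open set $\mathcal U\subset\mathbb R^d$, consistent with a smooth flux $f$ ($F(\nu;u,\dots,u)=f(u)$), with $df(u)$ diagonalizable with real eigenvalues. Let $\bar u^s\in\mathcal U^{\mathbb Z}$ be a stationary discrete shock profile, i.e. a fixed point of $(\mathcal Nu)_j=u_j-\boldsymbol\nu(F(\boldsymbol\nu;u_{j-p+1},\dots,u_{j+q})-F(\boldsymbol\nu;u_{j-p},\dots,u_{j+q-1}))$, with $|\bar u^s_j-u^\pm|\le Ce^{-c|j|}$ as $j\to\pm\infty$ for some states $u^\pm$. Define $B_k^\pm=\boldsymbol\nu\partial_{u_k}F(\boldsymbol\nu;u^\pm,\dots,u^\pm)$ ($-p\le k\le q-1$), $A_q^\pm=-B^\pm_{q-1}$, $A_{-p}^\pm=B_{-p}^\pm$, $A_k^\pm=\delta_{k,0}\mathrm{Id}+B_k^\pm-B_{k-1}^\pm$ otherwise; and $B_{j,k}=\boldsymbol\nu\partial_{u_k}F(\boldsymbol\nu;\bar u^s_{j-p},\dots,\bar u^s_{j+q-1})$, $A_{j,q}=-B_{j+1,q-1}$,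 $A_{j,-p}=B_{j,-p}$, $A_{j,k}=\delta_{k,0}\mathrm{Id}+B_{j,k}-B_{j+1,k-1}$ otherwise. Assume: $df(u^\pm)$ commutes with each $B_k^\pm$; with $(\mathbf P^\pm)^{-1}A_k^\pm\mathbf P^\pm=\mathrm{diag}(\lambda^\pm_{l,k})_l$ ($\mathbf P^\pm$ an eigenvector matrix of $df(u^\pm)$) and $\mathcal F_l^\pm(\kappa)=\sum_{k=-p}^q\lambda_{l,k}^\pm\kappa^k$, one has $|\mathcal F_l^\pm(\kappa)|<1$ for $\kappa\in\mathbb S^1\setminus\{1\}$ and $\mathcal F_l^\pm(e^{i\xi})=\exp(-i\alpha_l^\pm\xi-\beta_l^\pm\xi^{2\mu}+O(|\xi|^{2\mu+1}))$ with $\alpha_l^\pm\ne0$ real, $\mu\ge1$, $\mathrm{Re}\beta^\pm_l>0$; and $A_{j,-p},A_{j,q},A^\pm_{-p},A^\pm_q$ are invertible. Let $\mathscr L$ be the operator on $\ell^2(\mathbb Z,\mathbb C^d)$, $(\mathscr Lh)_j=\sum_{k=-p}^qA_{j,k}h_{j+k}$, and $\mathscr L^\pm$ the analogous operators with $A_k^\pm$. Let $\mathcal O$ be the unbounded connected component of $\mathbb C\setminus(\sigma(\mathscr L^+)\cup\sigma(\mathscr L^-))$ and $\mathcal O_\rho=\mathcal O\cap\rho(\mathscr L)$, $\rho(\mathscr L)$ the resolvent set. For $z\in\mathcal O_\rho$ and $j_0\in\mathbb Z$, the spatial Green's function $G(z,j_0,\cdot)\in\ell^2(\mathbb Z,\mathcal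 M_d(\mathbb C))$ is defined by $(z\mathrm{Id}-\mathscr L)G(z,j_0,\cdot)\vec e=\delta_{j_0}\vec e$ for all $\vec e\in\mathbb C^d$, where $\delta_{j_0}=(\delta_{j_0,j}\mathrm{Id})_j$. Set $W(z,j_0,j,\vec e)=(G(z,j_0,j+q-1)\vec e,\dots,G(z,j_0,j-p)\vec e)^T\in\mathbb C^{d(p+q)}$. *)

theory Defs
  imports "HOL-Analysis.Analysis"
begin

text \<open>The arguments \<open>(u_{-p},\<dots>,u_{q-1})\<close> of the numerical flux are encoded as a
 function \<open>int \<Rightarrow> real^'d\<close> of which only the values at \<open>{-p..q-1}\<close> matter.\<close>

definition diagm :: "('d::finite \<Rightarrow> 'a::zero) \<Rightarrow> 'a^'d^'d" where
  "diagm l = (\<chi> i j. if i = j then l i else 0)"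

definition cmat :: "real^'d^'e \<Rightarrow> complex^'d^'e" where
  "cmat M = (\<chi> i j. complex_of_real (M $ i $ j))"

definition window :: "(int \<Rightarrow> 'a) \<Rightarrow> int \<Rightarrow> int \<Rightarrow> 'a" where
  "window u j = (\<lambda>k. u (j + k))"

definition pderiv_slot ::
  "(real \<Rightarrow> (int \<Rightarrow> real^'d) \<Rightarrow> real^'d) \<Rightarrow> real \<Rightarrow> (int \<Rightarrow> real^'d::finite) \<Rightarrow> int \<Rightarrow> real^'d^'d" where
  "pderiv_slot F \<nu> u k = jacobian (\<lambda>v. F \<nu> (u(k := v))) (at (u k))"

definition scheme :: "(real \<Rightarrow> (int \<Rightarrow> real^'d) \<Rightarrow> real^'d) \<Rightarrow> real \<Rightarrow> (int \<Rightarrow> real^'d) \<Rightarrow> int \<Rightarrow> real^'d" where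
  "scheme F \<nu> u j = u j - \<nu> *\<^sub>R (F \<nu> (window u (j + 1)) - F \<nu> (window u j))"

definition Acoef :: "nat \<Rightarrow> nat \<Rightarrow> (int \<Rightarrow> int \<Rightarrow> real^'d^'d) \<Rightarrow> int \<Rightarrow> int \<Rightarrow> real^'d^'d" where
  "Acoef p q B j k =
     (if k = int q then - B (j + 1) (int q - 1)
      else if k = - int p then B j (- int p)
      else if - int p < k \<and> k < int q then
        (if k = 0 then mat 1 else 0) + B j k - B (j + 1) (k - 1)
      else 0)"

definition l2 :: "(int \<Rightarrow> complex^'d::finite) \<Rightarrow> bool" where
  "l2 h \<longleftrightarrow> (\<lambda>j. (norm (h j))\<^sup>2) summable_on UNIV"

definition Lop :: "nat \<Rightarrow> nat \<Rightarrow> (int \<Rightarrow> int \<Rightarrow> complex^'d^'d) \<Rightarrow> (int \<Rightarrow> complex^'d) \<Rightarrow> int \<Rightarrow> complex^'d::finite" where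
  "Lop p q A h j = (\<Sum>k\<in>{- int p..int q}. A j k *v h (j + k))"

text \<open>Resolvent set of \<open>\<L>\<close> acting on \<open>\<ell>^2(\<int>,\<complex>^d)\<close>: \<open>z Id - \<L>\<close> is bijective
 (the inverse is then bounded by the open mapping theorem, \<open>\<L>\<close> being bounded).\<close>
definition resolvent_set :: "nat \<Rightarrow> nat \<Rightarrow> (int \<Rightarrow> int \<Rightarrow> complex^'d^'d) \<Rightarrow> complex set" where
  "resolvent_set p q A =
     {z. \<forall>g::int \<Rightarrow> complex^'d::finite. l2 g \<longrightarrow>
            (\<exists>!h. l2 h \<and> (\<forall>j. z *s h j - Lop p q A h j = g j))}"

definition spectrum_op :: "nat \<Rightarrow> nat \<Rightarrow> (int \<Rightarrow> int \<Rightarrow> complex^'d::finite^'d) \<Rightarrow> complex set" where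
  "spectrum_op p q A = - resolvent_set p q A"

definition unbounded_component :: "complex set \<Rightarrow> complex set" where
  "unbounded_component S =
     \<Union>{connected_component_set S x | x. x \<in> S \<and> \<not> bounded (connected_component_set S x)}"

text \<open>Euclidean norm of \<open>W(z,j_0,j,e) = (G(z,j_0,j+q-1)e,\<dots>,G(z,j_0,j-p)e)\<close>.\<close>
definition Wnorm :: "nat \<Rightarrow> nat \<Rightarrow> (int \<Rightarrow> complex^'d::finite) \<Rightarrow> int \<Rightarrow> real" where
  "Wnorm p q g j = sqrt (\<Sum>m\<in>{j - int p..j + int q - 1}. (norm (g m))\<^sup>2)"

definition Bprof :: "(real \<Rightarrow> (int \<Rightarrow> real^'d) \<Rightarrow> real^'d) \<Rightarrow> real \<Rightarrow> (int \<Rightarrow> real^'d::finite) \<Rightarrow> int \<Rightarrow> int \<Rightarrow> real^'d^'d" where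
  "Bprof F \<nu> ub j k = \<nu> *\<^sub>R pderiv_slot F \<nu> (window ub j) k"

definition Bconst :: "(real \<Rightarrow> (int \<Rightarrow> real^'d) \<Rightarrow> real^'d) \<Rightarrow> real \<Rightarrow> real^'d::finite \<Rightarrow> int \<Rightarrow> int \<Rightarrow> real^'d^'d" where
  "Bconst F \<nu> u j k = \<nu> *\<^sub>R pderiv_slot F \<nu> (\<lambda>_. u) k"

definition Fsym :: "nat \<Rightarrow> nat \<Rightarrow> (int \<Rightarrow> real) \<Rightarrow> complex \<Rightarrow> complex" where
  "Fsym p q lam \<kappa> = (\<Sum>k\<in>{- int p..int q}. complex_of_real (lam k) * \<kappa> powi k)"

end

(*
  The linearized operator z - L is a banded operator on \<ell>\<^sup>2(\<int>, \<complex>\<^sup>d) whose coefficients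
  A_{j,k} are bounded uniformly in j, because the profile converges to u\<^sup>\<plusminus> and the Jacobians
  of F are continuous.  For z in the resolvent set, z - L is a bijection of \<ell>\<^sup>2, hence bounded
  below, ||(z - L) h|| \<ge> \<delta> ||h||, by the bounded inverse theorem (a consequence of Baire's
  theorem, since \<ell>\<^sup>2-balls are sequentially compact for pointwise convergence); by compactness
  of closure U one \<delta> serves all z in U.  The Combes-Thomas argument turns the lower bound into
  exponential decay: conjugating z - L by the weight exp (c |j - j0|) perturbs it by an operator
  of norm O(exp (c (p + q)) - 1) \<le> \<delta> / 2 for small c, so the weighted Green's function, which
  z - L maps to the Dirac mass e at j0, has \<ell>\<^sup>2-norm at most 2 |e| / \<delta>.  W(z, j0, j, e)
  consists of p + q consecutive values of G(z, j0, \<cdot>) e.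
*)
theory Submission
  imports Defs "HOL-Real_Asymp.Real_Asymp"
begin

section \<open>Square-summable sequences on \<open>\<int>\<close>\<close>

definition square_summable :: "(int \<Rightarrow> 'a::real_normed_vector) \<Rightarrow> bool" where
  "square_summable h \<longleftrightarrow> (\<lambda>j. (norm (h j))\<^sup>2) summable_on UNIV"

definition l2_norm :: "(int \<Rightarrow> 'a::real_normed_vector) \<Rightarrow> real" where
  "l2_norm h = sqrt (\<Sum>\<^sub>\<infinity>j. (norm (h j))\<^sup>2)"

definition l2_dist :: "(int \<Rightarrow> 'a::real_normed_vector) \<Rightarrow> (int \<Rightarrow> 'a) \<Rightarrow> real" where
  "l2_dist x y = l2_norm (\<lambda>j. x j - y j)"

lemma l2_iff_square_summable: "l2 h \<longleftrightarrow> square_summable h"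
  by (simp add: l2_def square_summable_def)

lemma l2_norm_nonneg: "0 \<le> l2_norm h"
  unfolding l2_norm_def by (simp add: infsum_nonneg)

lemma L2_set_le_l2_norm:
  assumes "square_summable h"
  shows "L2_set (\<lambda>j. norm (h j)) F \<le> l2_norm h"
proof (cases "finite F")
  case True
  have "(\<Sum>j\<in>F. (norm (h j))\<^sup>2) \<le> (\<Sum>\<^sub>\<infinity>j. (norm (h j))\<^sup>2)"
    using assms True unfolding square_summable_def by (intro finite_sum_le_infsum) auto
  then show ?thesis unfolding L2_set_def l2_norm_def by simp
qed (simp add: l2_norm_nonneg)

lemma norm_le_l2_norm: "square_summable h \<Longrightarrow> norm (h j) \<le> l2_norm h"
  using L2_set_le_l2_norm[of h "{j}"] by simp

lemma square_summable_if_L2_set_bounded: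
  assumes "\<And>F. finite F \<Longrightarrow> L2_set (\<lambda>j. norm (h j)) F \<le> B"
  shows "square_summable h \<and> l2_norm h \<le> B"
proof -
  have "0 \<le> B" using assms[of "{}"] by simp
  have partial_sums: "(\<Sum>j\<in>F. (norm (h j))\<^sup>2) \<le> B\<^sup>2" if "finite F" for F
    using assms[OF that] by (simp add: L2_set_def sqrt_le_D)
  have summable: "(\<lambda>j. (norm (h j))\<^sup>2) summable_on UNIV"
    by (rule nonneg_bdd_above_summable_on) (auto intro!: bdd_aboveI[where M="B\<^sup>2"] partial_sums)
  have "(\<Sum>\<^sub>\<infinity>j. (norm (h j))\<^sup>2) \<le> B\<^sup>2"
    using summable partial_sums by (intro infsum_le_finite_sums) auto
  then have "l2_norm h \<le> sqrt (B\<^sup>2)"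
    unfolding l2_norm_def by (rule real_sqrt_le_mono)
  with \<open>0 \<le> B\<close> summable show ?thesis
    unfolding square_summable_def by simp
qed

lemma square_summable_0: "square_summable (\<lambda>j. 0)"
  by (simp add: square_summable_def)

lemma l2_norm_0: "l2_norm (\<lambda>j. 0) = 0"
  by (simp add: l2_norm_def)

lemma square_summable_delta:
  "square_summable (\<lambda>j. if j = j0 then e else 0) \<and> l2_norm (\<lambda>j. if j = j0 then e else 0) \<le> norm e"
proof (rule square_summable_if_L2_set_bounded)
  fix F :: "int set" assume "finite F"
  have "L2_set (\<lambda>j. norm (if j = j0 then e else 0)) F \<le> (\<Sum>j\<in>F. norm (if j = j0 then e else 0))"
    by (rule L2_set_le_sum) simp
  also have "\<dots> \<le> norm e"
    using \<open>finite F\<close> by (simp add: if_distrib[of norm] sum.delta cong: if_cong)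
  finally show "L2_set (\<lambda>j. norm (if j = j0 then e else 0)) F \<le> norm e" .
qed

lemma square_summable_dominated:
  assumes "square_summable g" "0 \<le> c" "\<And>j. norm (f j) \<le> c * norm (g j)"
  shows "square_summable f \<and> l2_norm f \<le> c * l2_norm g"
proof (rule square_summable_if_L2_set_bounded)
  fix F :: "int set"
  have "L2_set (\<lambda>j. norm (f j)) F \<le> L2_set (\<lambda>j. c * norm (g j)) F"
    by (rule L2_set_mono) (auto intro: assms)
  also have "\<dots> = c * L2_set (\<lambda>j. norm (g j)) F"
    using assms by (simp add: L2_set_right_distrib)
  also have "\<dots> \<le> c * l2_norm g"
    using assms by (intro mult_left_mono L2_set_le_l2_norm)
  finally show "L2_set (\<lambda>j. norm (f j)) F \<le> c * l2_norm g" .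
qed

lemma square_summable_add:
  assumes "square_summable f" "square_summable g"
  shows "square_summable (\<lambda>j. f j + g j) \<and> l2_norm (\<lambda>j. f j + g j) \<le> l2_norm f + l2_norm g"
proof (rule square_summable_if_L2_set_bounded)
  fix F :: "int set"
  have "L2_set (\<lambda>j. norm (f j + g j)) F \<le> L2_set (\<lambda>j. norm (f j) + norm (g j)) F"
    by (rule L2_set_mono) (auto intro: norm_triangle_ineq)
  also have "\<dots> \<le> L2_set (\<lambda>j. norm (f j)) F + L2_set (\<lambda>j. norm (g j)) F"
    by (rule L2_set_triangle_ineq)
  also have "\<dots> \<le> l2_norm f + l2_norm g"
    using assms by (intro add_mono L2_set_le_l2_norm)
  finally show "L2_set (\<lambda>j. norm (f j + g j)) F \<le> l2_norm f + l2_norm g" .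
qed

lemma l2_norm_minus: "l2_norm (\<lambda>j. - f j) = l2_norm f"
  by (simp add: l2_norm_def)

lemma square_summable_scaleR: "square_summable h \<Longrightarrow> square_summable (\<lambda>j. c *\<^sub>R h j)"
  using square_summable_dominated[of h "\<bar>c\<bar>" "\<lambda>j. c *\<^sub>R h j"] by simp

lemma l2_norm_scaleR: "l2_norm (\<lambda>j. c *\<^sub>R h j) = \<bar>c\<bar> * l2_norm h"
  unfolding l2_norm_def by (simp add: power_mult_distrib infsum_cmult_right' real_sqrt_mult)

lemma square_summable_diff:
  assumes "square_summable f" "square_summable g"
  shows "square_summable (\<lambda>j. f j - g j) \<and> l2_norm (\<lambda>j. f j - g j) \<le> l2_norm f + l2_norm g"
proof -
  have "square_summable (\<lambda>j. - g j)"
    using square_summable_dominated[OF assms(2), of 1 "\<lambda>j. - g j"] by simp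
  from square_summable_add[OF assms(1) this] show ?thesis
    using l2_norm_minus[of g] by simp
qed

lemma square_summable_shift:
  assumes "square_summable g"
  shows "square_summable (\<lambda>j. g (j + k)) \<and> l2_norm (\<lambda>j. g (j + k)) \<le> l2_norm g"
proof (rule square_summable_if_L2_set_bounded)
  fix F :: "int set"
  have "L2_set (\<lambda>j. norm (g (j + k))) F = L2_set (\<lambda>j. norm (g j)) ((\<lambda>j. j + k) ` F)"
    unfolding L2_set_def by (subst sum.reindex) (auto simp: inj_on_def)
  also have "\<dots> \<le> l2_norm g"
    using assms by (rule L2_set_le_l2_norm)
  finally show "L2_set (\<lambda>j. norm (g (j + k))) F \<le> l2_norm g" .
qed

lemma square_summable_sum:
  assumes "finite K" "\<And>k. k \<in> K \<Longrightarrow> square_summable (f k)"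
  shows "square_summable (\<lambda>j. \<Sum>k\<in>K. f k j) \<and> l2_norm (\<lambda>j. \<Sum>k\<in>K. f k j) \<le> (\<Sum>k\<in>K. l2_norm (f k))"
  using assms
proof (induction K rule: finite_induct)
  case empty
  then show ?case by (simp add: square_summable_0 l2_norm_0)
next
  case (insert k K)
  then show ?case
    using square_summable_add[of "f k" "\<lambda>j. \<Sum>k\<in>K. f k j"] by auto
qed

lemma square_summable_band:
  fixes M :: real
  assumes "square_summable u" "finite K" "0 \<le> M"
    and "\<And>j. norm (v j) \<le> (\<Sum>k\<in>K. M * norm (u (j + k)))"
  shows "square_summable v \<and> l2_norm v \<le> card K * M * l2_norm u"
proof -
  have shifted: "square_summable (\<lambda>j. M * norm (u (j + k))) \<and>
      l2_norm (\<lambda>j. M * norm (u (j + k))) \<le> M * l2_norm u" for k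
  proof -
    have "square_summable (\<lambda>j. M * norm (u (j + k))) \<and>
        l2_norm (\<lambda>j. M * norm (u (j + k))) \<le> M * l2_norm (\<lambda>j. u (j + k))"
      using square_summable_shift[OF assms(1)] \<open>0 \<le> M\<close>
      by (intro square_summable_dominated) auto
    then show ?thesis
      using square_summable_shift[OF assms(1), of k] \<open>0 \<le> M\<close> by (auto intro: order_trans mult_left_mono)
  qed
  have "square_summable (\<lambda>j. \<Sum>k\<in>K. M * norm (u (j + k))) \<and>
      l2_norm (\<lambda>j. \<Sum>k\<in>K. M * norm (u (j + k))) \<le> card K * M * l2_norm u"
    using square_summable_sum[OF assms(2), of "\<lambda>k j. M * norm (u (j + k))"] shifted
      sum_mono[of K "\<lambda>k. l2_norm (\<lambda>j. M * norm (u (j + k)))" "\<lambda>_. M * l2_norm u"]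
    by auto
  then show ?thesis
    using square_summable_dominated[of "\<lambda>j. \<Sum>k\<in>K. M * norm (u (j + k))" 1 v] assms(4)
    by (auto simp: sum_nonneg \<open>0 \<le> M\<close>)
qed

lemma l2_norm_eq_0_iff: "square_summable f \<Longrightarrow> l2_norm f = 0 \<longleftrightarrow> f = (\<lambda>j. 0)"
  using norm_le_l2_norm[of f] by (auto simp: l2_norm_0 intro!: antisym ext)

lemma square_summable_pointwise_limit:
  assumes "\<And>j. (\<lambda>m. f m j) \<longlonglongrightarrow> h j"
    and "eventually (\<lambda>m. square_summable (f m) \<and> l2_norm (f m) \<le> B) sequentially"
  shows "square_summable h \<and> l2_norm h \<le> B"
proof (rule square_summable_if_L2_set_bounded)
  fix F :: "int set"
  have "(\<lambda>m. L2_set (\<lambda>j. norm (f m j)) F) \<longlonglongrightarrow> L2_set (\<lambda>j. norm (h j)) F"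
    unfolding L2_set_def by (intro tendsto_intros assms(1))
  moreover have "eventually (\<lambda>m. L2_set (\<lambda>j. norm (f m j)) F \<le> B) sequentially"
    using assms(2) by eventually_elim (auto intro: order_trans L2_set_le_l2_norm)
  ultimately show "L2_set (\<lambda>j. norm (h j)) F \<le> B"
    by (rule tendsto_upperbound) simp
qed

interpretation l2: Metric_space "Collect square_summable" l2_dist
proof
  fix x y z :: "int \<Rightarrow> 'a"
  show "0 \<le> l2_dist x y"
    by (simp add: l2_dist_def l2_norm_nonneg)
  show "l2_dist x y = l2_dist y x"
    using l2_norm_minus[of "\<lambda>j. x j - y j"] by (simp add: l2_dist_def)
  assume "x \<in> Collect square_summable" "y \<in> Collect square_summable"
  then have xy: "square_summable (\<lambda>j. x j - y j)"
    using square_summable_diff by blast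
  then show "l2_dist x y = 0 \<longleftrightarrow> x = y"
    by (simp add: l2_dist_def l2_norm_eq_0_iff fun_eq_iff)
  assume "z \<in> Collect square_summable"
  then have yz: "square_summable (\<lambda>j. y j - z j)"
    using \<open>y \<in> Collect square_summable\<close> square_summable_diff by blast
  have "(\<lambda>j. x j - y j + (y j - z j)) = (\<lambda>j. x j - z j)"
    by simp
  then show "l2_dist x z \<le> l2_dist x y + l2_dist y z"
    using square_summable_add[OF xy yz] by (simp add: l2_dist_def)
qed

lemma norm_le_l2_dist:
  "square_summable x \<Longrightarrow> square_summable y \<Longrightarrow> norm (x j - y j) \<le> l2_dist x y"
  unfolding l2_dist_def using square_summable_diff norm_le_l2_norm by blast

lemma l2_limit_imp_pointwise:
  assumes "limitin l2.mtopology \<sigma> g sequentially"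
  shows "(\<lambda>m. \<sigma> m j) \<longlonglongrightarrow> g j"
proof (rule LIMSEQ_I)
  fix e :: real assume "e > 0"
  with assms obtain N where "square_summable g" "\<forall>m\<ge>N. square_summable (\<sigma> m) \<and> l2_dist (\<sigma> m) g < e"
    unfolding l2.limit_metric_sequentially by auto
  then show "\<exists>N. \<forall>m\<ge>N. norm (\<sigma> m j - g j) < e"
    using norm_le_l2_dist by (meson le_less_trans)
qed

lemma l2_limit_of_MCauchy:
  assumes "l2.MCauchy \<sigma>" and pointwise: "\<And>j. (\<lambda>n. \<sigma> n j) \<longlonglongrightarrow> h j"
  shows "limitin l2.mtopology \<sigma> h sequentially"
proof -
  from assms(1) have in_l2: "\<And>n. square_summable (\<sigma> n)"
    and cauchy: "\<And>e. e > 0 \<Longrightarrow> \<exists>N. \<forall>n n'. N \<le> n \<longrightarrow> N \<le> n' \<longrightarrow> l2_dist (\<sigma> n) (\<sigma> n') < e"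
    unfolding l2.MCauchy_def by auto
  have tail: "\<exists>N. \<forall>n\<ge>N. square_summable (\<lambda>j. \<sigma> n j - h j) \<and> l2_dist (\<sigma> n) h \<le> e"
    if "e > 0" for e
  proof -
    obtain N where N: "\<forall>n n'. N \<le> n \<longrightarrow> N \<le> n' \<longrightarrow> l2_dist (\<sigma> n) (\<sigma> n') < e"
      using cauchy \<open>e > 0\<close> by blast
    have "square_summable (\<lambda>j. \<sigma> n j - h j) \<and> l2_norm (\<lambda>j. \<sigma> n j - h j) \<le> e" if "N \<le> n" for n
    proof (rule square_summable_pointwise_limit)
      show "(\<lambda>m. \<sigma> n j - \<sigma> m j) \<longlonglongrightarrow> \<sigma> n j - h j" for j
        by (intro tendsto_intros pointwise)
      show "\<forall>\<^sub>F m in sequentially. square_summable (\<lambda>j. \<sigma> n j - \<sigma> m j) \<and> l2_norm (\<lambda>j. \<sigma> n j - \<sigma> m j) \<le> e"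
        using N \<open>N \<le> n\<close> square_summable_diff[OF in_l2 in_l2]
        unfolding eventually_sequentially l2_dist_def by (meson less_imp_le)
    qed
    then show ?thesis by (auto simp: l2_dist_def)
  qed
  then obtain N where "square_summable (\<lambda>j. \<sigma> N j - h j)"
    using zero_less_one by blast
  then have "square_summable (\<lambda>j. \<sigma> N j - (\<sigma> N j - h j))"
    using square_summable_diff[OF in_l2] by blast
  then have "square_summable h" by simp
  moreover have "\<exists>N. \<forall>n\<ge>N. square_summable (\<sigma> n) \<and> l2_dist (\<sigma> n) h < e" if "e > 0" for e
  proof -
    obtain N where "\<forall>n\<ge>N. l2_dist (\<sigma> n) h \<le> e / 2"
      using tail[of "e / 2"] \<open>e > 0\<close> by auto
    then show ?thesis
      using in_l2 \<open>e > 0\<close> by fastforce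
  qed
  ultimately show ?thesis
    unfolding l2.limit_metric_sequentially by auto
qed

lemma l2_mcomplete: "Metric_space.mcomplete (Collect square_summable) (l2_dist :: (int \<Rightarrow> 'a::banach) \<Rightarrow> _)"
  unfolding l2.mcomplete_def
proof (intro allI impI)
  fix \<sigma> :: "nat \<Rightarrow> int \<Rightarrow> 'a" assume "l2.MCauchy \<sigma>"
  then have "Cauchy (\<lambda>n. \<sigma> n j)" for j
    unfolding l2.MCauchy_def Cauchy_def dist_norm using norm_le_l2_dist
    by (metis (no_types, lifting) le_less_trans mem_Collect_eq range_subsetD)
  then obtain h where "\<And>j. (\<lambda>n. \<sigma> n j) \<longlonglongrightarrow> h j"
    unfolding Cauchy_convergent_iff convergent_def by metis
  with \<open>l2.MCauchy \<sigma>\<close> show "\<exists>h. limitin l2.mtopology \<sigma> h sequentially"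
    using l2_limit_of_MCauchy by blast
qed

lemma tendsto_fun_iff_pointwise:
  fixes f :: "'b \<Rightarrow> 'i \<Rightarrow> 'a::topological_space"
  shows "(f \<longlongrightarrow> l) F \<longleftrightarrow> (\<forall>i. ((\<lambda>x. f x i) \<longlongrightarrow> l i) F)"
  using limitin_componentwise[of "\<lambda>_. euclidean" UNIV f l F] by (simp add: euclidean_product_topology)

lemma l2_bounded_pointwise_convergent_subseq:
  fixes hs :: "nat \<Rightarrow> int \<Rightarrow> 'a::euclidean_space"
  assumes "\<And>m. square_summable (hs m)" "\<And>m. l2_norm (hs m) \<le> B"
  obtains r h where "strict_mono r" "square_summable h" "l2_norm h \<le> B"
    "\<And>j. (\<lambda>m. hs (r m) j) \<longlonglongrightarrow> h j"
proof -
  define S where "S = PiE (UNIV :: int set) (\<lambda>_. cball (0::'a) B)"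
  have "compactin (product_topology (\<lambda>_. euclidean) UNIV) S"
    unfolding S_def by (subst compactin_PiE) auto
  then have "seq_compact S"
    by (simp add: euclidean_product_topology compact_imp_seq_compact)
  moreover have "hs m \<in> S" for m
    using order_trans[OF norm_le_l2_norm[OF assms(1)] assms(2)] by (auto simp: S_def)
  ultimately obtain h r where "strict_mono r" "(hs \<circ> r) \<longlonglongrightarrow> h"
    unfolding seq_compact_def by meson
  then have pointwise: "(\<lambda>m. hs (r m) j) \<longlonglongrightarrow> h j" for j
    by (simp add: tendsto_fun_iff_pointwise o_def)
  moreover have "square_summable h \<and> l2_norm h \<le> B"
    using assms by (intro square_summable_pointwise_limit[OF pointwise]) auto
  ultimately show ?thesis
    using that \<open>strict_mono r\<close> by blast
qed

section \<open>A bounded inverse theorem on \<open>\<ell>\<^sup>2\<close>\<close>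

lemma closedin_image_l2_cball:
  fixes T :: "(int \<Rightarrow> 'a::euclidean_space) \<Rightarrow> int \<Rightarrow> 'a"
  assumes maps: "\<And>h. square_summable h \<Longrightarrow> square_summable (T h)"
    and cont: "\<And>hs h j. (\<And>i. (\<lambda>m. hs m i) \<longlonglongrightarrow> h i) \<Longrightarrow> (\<lambda>m. T (hs m) j) \<longlonglongrightarrow> T h j"
  shows "closedin l2.mtopology (T ` {h. square_summable h \<and> l2_norm h \<le> R})"
  unfolding l2.metric_closedin_iff_sequentially_closed
proof (intro conjI allI impI)
  show "T ` {h. square_summable h \<and> l2_norm h \<le> R} \<subseteq> Collect square_summable"
    using maps by auto
  fix \<sigma> g
  assume "range \<sigma> \<subseteq> T ` {h. square_summable h \<and> l2_norm h \<le> R} \<and> limitin l2.mtopology \<sigma> g sequentially"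
  then have preimages: "\<forall>m. \<exists>h. square_summable h \<and> l2_norm h \<le> R \<and> \<sigma> m = T h"
    and lim: "limitin l2.mtopology \<sigma> g sequentially"
    by (auto simp: image_iff)
  obtain hs where "\<forall>m. square_summable (hs m) \<and> l2_norm (hs m) \<le> R \<and> \<sigma> m = T (hs m)"
    using choice[OF preimages] by (elim exE)
  then have hs: "\<And>m. square_summable (hs m)" "\<And>m. l2_norm (hs m) \<le> R" "\<And>m. \<sigma> m = T (hs m)"
    by simp_all
  obtain r h where r: "strict_mono r" and h: "square_summable h" "l2_norm h \<le> R"
    and pointwise: "\<And>j. (\<lambda>m. hs (r m) j) \<longlonglongrightarrow> h j"
    using l2_bounded_pointwise_convergent_subseq[of hs R] hs by blast
  have "T h = g"
  proof
    fix j
    have "(\<lambda>m. T (hs (r m)) j) \<longlonglongrightarrow> T h j"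
      using cont[OF pointwise] .
    moreover have "(\<lambda>m. T (hs (r m)) j) \<longlonglongrightarrow> g j"
      using LIMSEQ_subseq_LIMSEQ[OF l2_limit_imp_pointwise[OF lim] r] by (simp add: o_def hs(3))
    ultimately show "T h j = g j"
      by (rule LIMSEQ_unique)
  qed
  with h show "g \<in> T ` {h. square_summable h \<and> l2_norm h \<le> R}"
    by blast
qed

lemma l2_Baire_ball:
  fixes K :: "nat \<Rightarrow> (int \<Rightarrow> 'a::banach) set"
  assumes closed: "\<And>n. closedin l2.mtopology (K n)"
    and cover: "\<Union>(range K) = Collect square_summable"
  obtains n g0 \<rho> where "\<rho> > 0" "square_summable g0" "l2.mball g0 \<rho> \<subseteq> K n"
proof -
  have "\<exists>n. l2.mtopology interior_of K n \<noteq> {}"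
  proof (rule ccontr)
    assume "\<nexists>n. l2.mtopology interior_of K n \<noteq> {}"
    then have "l2.mtopology interior_of \<Union>(range K) = {}"
      using closed by (intro l2.metric_Baire_category_alt[OF l2_mcomplete]) auto
    moreover have "l2.mtopology interior_of \<Union>(range K) = Collect square_summable"
      using cover interior_of_topspace[of l2.mtopology] by simp
    ultimately show False
      using square_summable_0 by blast
  qed
  then obtain n g0 where g0: "g0 \<in> l2.mtopology interior_of K n"
    by blast
  have "openin l2.mtopology (l2.mtopology interior_of K n)"
    by simp
  then have "\<forall>x. x \<in> l2.mtopology interior_of K n \<longrightarrow>
      (\<exists>r>0. l2.mball x r \<subseteq> l2.mtopology interior_of K n)"
    unfolding l2.openin_mtopology by (rule conjunct2)
  from this[rule_format, OF g0] obtain \<rho> where "\<rho> > 0"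
    and ball_interior: "l2.mball g0 \<rho> \<subseteq> l2.mtopology interior_of K n"
    by (elim exE conjE)
  moreover have "l2.mball g0 \<rho> \<subseteq> K n"
    using ball_interior interior_of_subset by (rule subset_trans)
  moreover have "square_summable g0"
    using g0 interior_of_subset_topspace[of l2.mtopology "K n"] by auto
  ultimately show ?thesis
    using that by blast
qed

lemma small_preimages_if_l2_ball_in_image:
  fixes T :: "(int \<Rightarrow> 'a::real_normed_vector) \<Rightarrow> int \<Rightarrow> 'a"
  assumes diff: "\<And>h g. T (\<lambda>j. h j - g j) = (\<lambda>j. T h j - T g j)"
    and ball: "l2.mball g0 \<rho> \<subseteq> T ` {h. square_summable h \<and> l2_norm h \<le> R}"
    and "square_summable g0" "square_summable g" "l2_norm g < \<rho>"
  shows "\<exists>h. square_summable h \<and> l2_norm h \<le> 2 * R \<and> T h = g"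
proof -
  have "square_summable (\<lambda>j. g0 j + g j)"
    using square_summable_add[OF \<open>square_summable g0\<close> \<open>square_summable g\<close>] by blast
  moreover have "l2_dist g0 (\<lambda>j. g0 j + g j) = l2_norm g"
    using l2_norm_minus[of g] by (simp add: l2_dist_def)
  ultimately have "(\<lambda>j. g0 j + g j) \<in> l2.mball g0 \<rho>"
    using \<open>square_summable g0\<close> \<open>l2_norm g < \<rho>\<close> by simp
  then obtain h1 where h1: "h1 \<in> {h. square_summable h \<and> l2_norm h \<le> R}"
    and h1_image: "(\<lambda>j. g0 j + g j) = T h1"
    using ball by blast
  have "g0 \<in> l2.mball g0 \<rho>"
    using \<open>square_summable g0\<close> \<open>l2_norm g < \<rho>\<close> l2_norm_nonneg[of g] by simp
  then obtain h0 where h0: "h0 \<in> {h. square_summable h \<and> l2_norm h \<le> R}" and h0_image: "g0 = T h0"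
    using ball by blast
  have "T (\<lambda>j. h1 j - h0 j) = g"
    unfolding diff h1_image[symmetric] h0_image[symmetric] by simp
  moreover have "square_summable (\<lambda>j. h1 j - h0 j) \<and> l2_norm (\<lambda>j. h1 j - h0 j) \<le> 2 * R"
    using h0 h1 square_summable_diff[of h1 h0] by simp
  ultimately show ?thesis
    by blast
qed

lemma bounded_below_if_small_preimages:
  fixes T :: "(int \<Rightarrow> 'a::real_normed_vector) \<Rightarrow> int \<Rightarrow> 'a"
  assumes diff: "\<And>h g. T (\<lambda>j. h j - g j) = (\<lambda>j. T h j - T g j)"
    and scale: "\<And>h c. T (\<lambda>j. c *\<^sub>R h j) = (\<lambda>j. c *\<^sub>R T h j)"
    and maps: "\<And>h. square_summable h \<Longrightarrow> square_summable (T h)"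
    and inj: "\<And>h. square_summable h \<Longrightarrow> T h = (\<lambda>j. 0) \<Longrightarrow> h = (\<lambda>j. 0)"
    and small: "\<And>g. square_summable g \<Longrightarrow> l2_norm g < \<rho> \<Longrightarrow> \<exists>h. square_summable h \<and> l2_norm h \<le> R \<and> T h = g"
    and "\<rho> > 0" "square_summable h"
  shows "\<rho> * l2_norm h \<le> 2 * R * l2_norm (T h)"
proof (cases "T h = (\<lambda>j. 0)")
  case True
  then show ?thesis
    using inj[OF \<open>square_summable h\<close> True] by (simp add: l2_norm_0)
next
  case False
  have "square_summable (T h)"
    using maps \<open>square_summable h\<close> .
  with False have "l2_norm (T h) > 0"
    using l2_norm_nonneg[of "T h"] l2_norm_eq_0_iff[of "T h"] by simp
  define t where "t = \<rho> / (2 * l2_norm (T h))"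
  have "t > 0"
    unfolding t_def using \<open>l2_norm (T h) > 0\<close> \<open>\<rho> > 0\<close> by simp
  have "l2_norm (\<lambda>j. t *\<^sub>R T h j) < \<rho>"
    using \<open>\<rho> > 0\<close> \<open>l2_norm (T h) > 0\<close> by (simp add: l2_norm_scaleR t_def)
  then obtain h' where h': "square_summable h'" "l2_norm h' \<le> R" "T h' = (\<lambda>j. t *\<^sub>R T h j)"
    using small square_summable_scaleR[OF \<open>square_summable (T h)\<close>] by blast
  have "T (\<lambda>j. h' j - t *\<^sub>R h j) = (\<lambda>j. 0)"
    unfolding diff scale h'(3) by simp
  moreover have "square_summable (\<lambda>j. h' j - t *\<^sub>R h j)"
    using square_summable_diff[OF h'(1) square_summable_scaleR[OF \<open>square_summable h\<close>]] by blast
  ultimately have "(\<lambda>j. h' j - t *\<^sub>R h j) = (\<lambda>j. 0)"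
    using inj by blast
  then have "h' = (\<lambda>j. t *\<^sub>R h j)"
    by (simp add: fun_eq_iff)
  then have "t * l2_norm h \<le> R"
    using \<open>t > 0\<close> h'(2) l2_norm_scaleR[of t h] by simp
  then show ?thesis
    using \<open>l2_norm (T h) > 0\<close> by (simp add: t_def field_simps)
qed

lemma bijective_l2_map_bounded_below:
  fixes T :: "(int \<Rightarrow> 'a::euclidean_space) \<Rightarrow> int \<Rightarrow> 'a"
  assumes diff: "\<And>h g. T (\<lambda>j. h j - g j) = (\<lambda>j. T h j - T g j)"
    and scale: "\<And>h c. T (\<lambda>j. c *\<^sub>R h j) = (\<lambda>j. c *\<^sub>R T h j)"
    and maps: "\<And>h. square_summable h \<Longrightarrow> square_summable (T h)"
    and cont: "\<And>hs h j. (\<And>i. (\<lambda>m. hs m i) \<longlonglongrightarrow> h i) \<Longrightarrow> (\<lambda>m. T (hs m) j) \<longlonglongrightarrow> T h j"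
    and surj: "\<And>g. square_summable g \<Longrightarrow> \<exists>h. square_summable h \<and> T h = g"
    and inj: "\<And>h. square_summable h \<Longrightarrow> T h = (\<lambda>j. 0) \<Longrightarrow> h = (\<lambda>j. 0)"
  shows "\<exists>\<delta>>0. \<forall>h. square_summable h \<longrightarrow> \<delta> * l2_norm h \<le> l2_norm (T h)"
proof -
  define K where "K n = T ` {h. square_summable h \<and> l2_norm h \<le> real (Suc n)}" for n
  have "closedin l2.mtopology (K n)" for n
    unfolding K_def using maps cont by (rule closedin_image_l2_cball)
  moreover have "\<Union>(range K) = Collect square_summable"
  proof
    show "\<Union>(range K) \<subseteq> Collect square_summable"
      using maps by (auto simp: K_def)
    show "Collect square_summable \<subseteq> \<Union>(range K)"
    proof
      fix g :: "int \<Rightarrow> 'a" assume "g \<in> Collect square_summable"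
      then obtain h where "square_summable h" "T h = g"
        using surj by auto
      moreover have "l2_norm h \<le> real (Suc (nat \<lceil>l2_norm h\<rceil>))"
        by linarith
      ultimately show "g \<in> \<Union>(range K)"
        unfolding K_def by blast
    qed
  qed
  ultimately obtain n g0 \<rho> where "\<rho> > 0" "square_summable g0" and ball: "l2.mball g0 \<rho> \<subseteq> K n"
    by (rule l2_Baire_ball)
  have "\<rho> * l2_norm h \<le> 2 * (2 * real (Suc n)) * l2_norm (T h)" if "square_summable h" for h
    using bounded_below_if_small_preimages[where T = T, OF diff scale maps inj _ \<open>\<rho> > 0\<close> that]
      small_preimages_if_l2_ball_in_image[where T = T, OF diff ball[unfolded K_def] \<open>square_summable g0\<close>]
    by blast
  with \<open>\<rho> > 0\<close> show ?thesis
    by (intro exI[of _ "\<rho> / (4 * real (Suc n))"]) (simp add: field_simps)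
qed

section \<open>Banded operators on \<open>\<ell>\<^sup>2\<close>\<close>

lemma norm_vector_smult:
  fixes v :: "'a::real_normed_div_algebra^'n::finite"
  shows "norm (c *s v) = norm c * norm v"
  unfolding norm_vec_def by (simp add: norm_mult L2_set_right_distrib)

lemma norm_matrix_vector_mult_le:
  fixes A :: "'a::real_normed_algebra_1^'n::finite^'m::finite"
  assumes "\<And>i j. norm (A $ i $ j) \<le> b"
  shows "norm (A *v x) \<le> real CARD('m) * real CARD('n) * b * norm x"
proof -
  have row: "norm ((A *v x) $ i) \<le> real CARD('n) * b * norm x" for i
  proof -
    have "norm ((A *v x) $ i) \<le> (\<Sum>j\<in>UNIV. norm (A $ i $ j) * norm (x $ j))"
      unfolding matrix_vector_mult_def by (auto intro: norm_sum[THEN order_trans] sum_mono norm_mult_ineq)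
    also have "\<dots> \<le> (\<Sum>j\<in>(UNIV::'n set). b * norm x)"
      using assms by (intro sum_mono mult_mono Finite_Cartesian_Product.norm_nth_le)
        (auto intro: order_trans[OF norm_ge_zero])
    finally show ?thesis by simp
  qed
  have "norm (A *v x) \<le> (\<Sum>i\<in>UNIV. norm ((A *v x) $ i))"
    unfolding norm_vec_def by (rule L2_set_le_sum) simp
  also have "\<dots> \<le> (\<Sum>i\<in>(UNIV::'m set). real CARD('n) * b * norm x)"
    by (intro sum_mono row)
  finally show ?thesis by simp
qed

lemma matrix_vector_mult_scaleR_right:
  fixes A :: "'a::real_algebra_1^'n::finite^'m::finite"
  shows "A *v (c *\<^sub>R x) = c *\<^sub>R (A *v x)"
  by (simp add: vec_eq_iff matrix_vector_mult_def scaleR_sum_right)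

lemma vector_smult_scaleR:
  fixes x :: "'a::real_algebra_1^'n::finite"
  shows "z *s (c *\<^sub>R x) = c *\<^sub>R (z *s x)"
  by (simp add: vec_eq_iff)

definition shifted_Lop ::
  "nat \<Rightarrow> nat \<Rightarrow> (int \<Rightarrow> int \<Rightarrow> complex^'d^'d) \<Rightarrow> complex \<Rightarrow> (int \<Rightarrow> complex^'d) \<Rightarrow> int \<Rightarrow> complex^'d::finite"
  where "shifted_Lop p q A z h = (\<lambda>j. z *s h j - Lop p q A h j)"

lemma shifted_Lop_diff:
  "shifted_Lop p q A z (\<lambda>j. h j - g j) = (\<lambda>j. shifted_Lop p q A z h j - shifted_Lop p q A z g j)"
  unfolding shifted_Lop_def Lop_def
  by (simp add: fun_eq_iff matrix_vector_mult_diff_distrib sum_subtractf vector_ssub_ldistrib)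

lemma shifted_Lop_scaleR:
  "shifted_Lop p q A z (\<lambda>j. c *\<^sub>R h j) = (\<lambda>j. c *\<^sub>R shifted_Lop p q A z h j)"
  unfolding shifted_Lop_def Lop_def
  by (simp add: fun_eq_iff matrix_vector_mult_scaleR_right vector_smult_scaleR scaleR_diff_right
      scaleR_sum_right)

locale bounded_coefficients =
  fixes A :: "int \<Rightarrow> int \<Rightarrow> complex^'d::finite^'d" and M :: real
  assumes coeff_bound: "\<And>j k x. norm (A j k *v x) \<le> M * norm x"
    and M_nonneg: "0 \<le> M"
begin

lemma square_summable_Lop:
  assumes "square_summable h"
  shows "square_summable (Lop p q A h) \<and> l2_norm (Lop p q A h) \<le> card {- int p..int q} * M * l2_norm h"
proof (rule square_summable_band[OF assms _ M_nonneg])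
  show "norm (Lop p q A h j) \<le> (\<Sum>k\<in>{- int p..int q}. M * norm (h (j + k)))" for j
    unfolding Lop_def by (rule norm_sum[THEN order_trans]) (intro sum_mono coeff_bound)
qed simp

lemma square_summable_shifted_Lop:
  assumes "square_summable h"
  shows "square_summable (shifted_Lop p q A z h)"
proof -
  have "square_summable (\<lambda>j. z *s h j)"
    using square_summable_dominated[OF assms, of "norm z" "\<lambda>j. z *s h j"] by (simp add: norm_vector_smult)
  with square_summable_Lop[OF assms] show ?thesis
    unfolding shifted_Lop_def using square_summable_diff by blast
qed

lemma tendsto_shifted_Lop:
  assumes "\<And>i. (\<lambda>m. hs m i) \<longlonglongrightarrow> h i"
  shows "(\<lambda>m. shifted_Lop p q A z (hs m) j) \<longlonglongrightarrow> shifted_Lop p q A z h j"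
proof -
  have "(\<lambda>m. B *v hs m i) \<longlonglongrightarrow> B *v h i" for B :: "complex^'d^'d" and i
    using matrix_vector_mul_bounded_linear assms by (rule bounded_linear.tendsto)
  moreover have "(\<lambda>m. z *s hs m j) \<longlonglongrightarrow> z *s h j"
    by (rule vec_tendstoI) (simp add: tendsto_mult_left tendsto_vec_nth assms)
  ultimately show ?thesis
    unfolding shifted_Lop_def Lop_def by (intro tendsto_diff tendsto_sum)
qed

lemma shifted_Lop_bounded_below:
  assumes "z \<in> resolvent_set p q A"
  shows "\<exists>\<delta>>0. \<forall>h. square_summable h \<longrightarrow> \<delta> * l2_norm h \<le> l2_norm (shifted_Lop p q A z h)"
proof (rule bijective_l2_map_bounded_below)
  have unique: "\<exists>!h. square_summable h \<and> shifted_Lop p q A z h = g" if "square_summable g" for g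
    using assms that unfolding resolvent_set_def l2_iff_square_summable shifted_Lop_def fun_eq_iff
    by blast
  show "\<exists>h. square_summable h \<and> shifted_Lop p q A z h = g" if "square_summable g" for g
    using unique[OF that] by blast
  show "h = (\<lambda>j. 0)" if "square_summable h" "shifted_Lop p q A z h = (\<lambda>j. 0)" for h
  proof -
    have "shifted_Lop p q A z (\<lambda>j. 0) = (\<lambda>j. 0)"
      by (simp add: shifted_Lop_def Lop_def)
    then show ?thesis
      using unique[OF square_summable_0] that square_summable_0 by blast
  qed
qed (fact shifted_Lop_diff shifted_Lop_scaleR square_summable_shifted_Lop tendsto_shifted_Lop)+

lemma l2_norm_shifted_Lop_le:
  assumes "square_summable h"
  shows "l2_norm (shifted_Lop p q A z h) \<le> l2_norm (shifted_Lop p q A z' h) + cmod (z - z') * l2_norm h"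
proof -
  have "shifted_Lop p q A z h = (\<lambda>j. shifted_Lop p q A z' h j + (z - z') *s h j)"
    unfolding shifted_Lop_def by (simp add: fun_eq_iff vec_eq_iff algebra_simps)
  moreover have scaled: "square_summable (\<lambda>j. (z - z') *s h j) \<and>
      l2_norm (\<lambda>j. (z - z') *s h j) \<le> cmod (z - z') * l2_norm h"
    using assms by (intro square_summable_dominated)
      (simp_all only: norm_vector_smult norm_ge_zero order_refl)
  moreover have "square_summable (shifted_Lop p q A z' h)"
    using assms by (rule square_summable_shifted_Lop)
  ultimately have "l2_norm (shifted_Lop p q A z h)
      \<le> l2_norm (shifted_Lop p q A z' h) + l2_norm (\<lambda>j. (z - z') *s h j)"
    using square_summable_add[OF _ scaled[THEN conjunct1]] by simp
  with scaled show ?thesis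
    by linarith
qed

text \<open>A lower bound \<open>\<delta>\<close> at \<open>z\<close> persists, halved, on the disc of radius \<open>\<delta> / 2\<close> around \<open>z\<close>.\<close>
lemma shifted_Lop_uniformly_bounded_below:
  assumes "compact K" "K \<subseteq> resolvent_set p q A"
  shows "\<exists>\<delta>>0. \<forall>z\<in>K. \<forall>h. square_summable h \<longrightarrow> \<delta> * l2_norm h \<le> l2_norm (shifted_Lop p q A z h)"
proof -
  have "\<forall>z\<in>K. \<exists>\<delta>. \<delta> > 0 \<and> (\<forall>h. square_summable h \<longrightarrow> \<delta> * l2_norm h \<le> l2_norm (shifted_Lop p q A z h))"
    using shifted_Lop_bounded_below assms(2) by blast
  from bchoice[OF this] obtain \<delta> where
    "\<forall>z\<in>K. \<delta> z > 0 \<and> (\<forall>h. square_summable h \<longrightarrow> \<delta> z * l2_norm h \<le> l2_norm (shifted_Lop p q A z h))"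
    by (elim exE)
  then have \<delta>: "\<And>z. z \<in> K \<Longrightarrow> \<delta> z > 0"
    "\<And>z h. z \<in> K \<Longrightarrow> square_summable h \<Longrightarrow> \<delta> z * l2_norm h \<le> l2_norm (shifted_Lop p q A z h)"
    by simp_all
  obtain C where C: "C \<subseteq> K" "finite C" "K \<subseteq> (\<Union>z\<in>C. ball z (\<delta> z / 2))"
  proof (rule compactE_image[OF assms(1), of K "\<lambda>z. ball z (\<delta> z / 2)"])
    show "K \<subseteq> (\<Union>z\<in>K. ball z (\<delta> z / 2))"
      using \<delta>(1) by force
  qed (simp_all add: that)
  define \<delta>_min where "\<delta>_min = Min (insert 1 ((\<lambda>z. \<delta> z / 2) ` C))"
  have "\<delta>_min > 0"
    unfolding \<delta>_min_def using C \<delta>(1) by auto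
  moreover have "\<delta>_min * l2_norm h \<le> l2_norm (shifted_Lop p q A z' h)"
    if "z' \<in> K" "square_summable h" for z' h
  proof -
    obtain z where z: "z \<in> C" "dist z z' < \<delta> z / 2"
      using C \<open>z' \<in> K\<close> by auto
    have "\<delta> z * l2_norm h \<le> l2_norm (shifted_Lop p q A z' h) + cmod (z - z') * l2_norm h"
      using \<delta>(2)[of z h] C(1) z(1) that(2)
        l2_norm_shifted_Lop_le[OF that(2), where p = p and q = q and z = z and z' = z']
      by force
    moreover have "cmod (z - z') * l2_norm h \<le> \<delta> z / 2 * l2_norm h"
      using z(2) by (intro mult_right_mono l2_norm_nonneg) (simp add: dist_norm)
    moreover have "\<delta>_min \<le> \<delta> z / 2"
      unfolding \<delta>_min_def using C z(1) by (intro Min_le) auto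
    ultimately show ?thesis
      using mult_right_mono[OF \<open>\<delta>_min \<le> \<delta> z / 2\<close> l2_norm_nonneg[of h]] by linarith
  qed
  ultimately show ?thesis
    by blast
qed

end

section \<open>Exponential decay of the Green's function\<close>

lemma abs_exp_diff_le:
  fixes a b c K :: real
  assumes "c \<ge> 0" "\<bar>a - b\<bar> \<le> K"
  shows "\<bar>exp (c * a) - exp (c * b)\<bar> \<le> (exp (c * K) - 1) * exp (c * b)"
proof -
  have exp_minus_1: "\<bar>exp x - 1\<bar> \<le> exp \<bar>x\<bar> - 1" for x :: real
  proof (cases "x \<ge> 0")
    case False
    then have "\<bar>exp x - 1\<bar> = 1 - exp x" "\<bar>x\<bar> = - x"
      by simp_all
    with exp_ge_add_one_self[of x] exp_ge_add_one_self[of "- x"] show ?thesis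
      by linarith
  qed simp
  have "exp (c * a) - exp (c * b) = (exp (c * (a - b)) - 1) * exp (c * b)"
    by (simp add: algebra_simps flip: exp_add)
  then have "\<bar>exp (c * a) - exp (c * b)\<bar> = \<bar>exp (c * (a - b)) - 1\<bar> * exp (c * b)"
    by (simp add: abs_mult)
  also have "\<dots> \<le> (exp \<bar>c * (a - b)\<bar> - 1) * exp (c * b)"
    by (intro mult_right_mono exp_minus_1) simp
  also have "\<dots> \<le> (exp (c * K) - 1) * exp (c * b)"
    using assms by (intro mult_right_mono) (auto simp: abs_mult mult_left_mono)
  finally show ?thesis .
qed

lemma small_exponential_rate:
  fixes K x :: real
  assumes "\<epsilon> > 0"
  shows "\<exists>c>0. K * (exp (c * x) - 1) \<le> \<epsilon>"
proof -
  have "((\<lambda>c. K * (exp (c * x) - 1)) \<longlongrightarrow> K * (exp (0 * x) - 1)) (at_right 0)"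
    by (intro tendsto_intros)
  then have "\<forall>\<^sub>F c in at_right 0. K * (exp (c * x) - 1) < \<epsilon>"
    using assms by (auto dest: order_tendstoD(2))
  then have "\<forall>\<^sub>F c in at_right 0. c > 0 \<and> K * (exp (c * x) - 1) < \<epsilon>"
    using eventually_at_right_less by (rule eventually_conj[rotated])
  moreover have "at_right (0::real) \<noteq> bot"
    using trivial_limit_at_right_real unfolding trivial_limit_def .
  ultimately obtain c where "c > 0" "K * (exp (c * x) - 1) < \<epsilon>"
    using eventually_happens' by blast
  then show ?thesis
    by (intro exI[of _ c]) simp
qed

lemma truncated_exp_weight_diff_le:
  fixes c K :: real and i i' j0 :: int
  assumes "c \<ge> 0" "\<bar>i - i'\<bar> \<le> K"
  shows "\<bar>exp (c * min (nat \<bar>i - j0\<bar>) N) - exp (c * min (nat \<bar>i' - j0\<bar>) N)\<bar>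
           \<le> (exp (c * K) - 1) * exp (c * min (nat \<bar>i' - j0\<bar>) N)"
proof (rule abs_exp_diff_le[OF \<open>c \<ge> 0\<close>])
  show "\<bar>real (min (nat \<bar>i - j0\<bar>) N) - real (min (nat \<bar>i' - j0\<bar>) N)\<bar> \<le> K"
    using assms(2) by (simp add: min_def) linarith
qed

lemma Wnorm_le_of_exp_decay:
  fixes c :: real and j0 :: int
  assumes "c \<ge> 0" and decay: "\<And>m. norm (g m) \<le> K * exp (- c * \<bar>m - j0\<bar>)"
  shows "Wnorm p q g j \<le> real (p + q) * exp (c * real (p + q)) * K * exp (- c * \<bar>j - j0\<bar>)"
proof -
  define I where "I = {j - int p..j + int q - 1}"
  have "K \<ge> 0"
    using order_trans[OF norm_ge_zero decay[of j0]] by simp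
  have "exp (- c * \<bar>m - j0\<bar>) \<le> exp (c * real (p + q)) * exp (- c * \<bar>j - j0\<bar>)" if "m \<in> I" for m
  proof -
    have "real_of_int \<bar>j - j0\<bar> - real_of_int \<bar>m - j0\<bar> \<le> real (p + q)"
      using that unfolding I_def by simp linarith
    then have "c * (real_of_int \<bar>j - j0\<bar> - real_of_int \<bar>m - j0\<bar>) \<le> c * real (p + q)"
      using \<open>c \<ge> 0\<close> by (rule mult_left_mono)
    then show ?thesis
      by (simp add: algebra_simps flip: exp_add)
  qed
  then have "norm (g m) \<le> K * (exp (c * real (p + q)) * exp (- c * \<bar>j - j0\<bar>))" if "m \<in> I" for m
    using decay[of m] \<open>K \<ge> 0\<close> that by (meson mult_left_mono order_trans)
  then have "(\<Sum>m\<in>I. norm (g m)) \<le> real (card I) * (K * (exp (c * real (p + q)) * exp (- c * \<bar>j - j0\<bar>)))"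
    using sum_bounded_above by metis
  moreover have "Wnorm p q g j \<le> (\<Sum>m\<in>I. norm (g m))"
    unfolding Wnorm_def I_def using L2_set_le_sum[of I "\<lambda>m. norm (g m)"] by (simp add: L2_set_def I_def)
  moreover have "card I = p + q"
    unfolding I_def by simp
  ultimately show ?thesis
    by (simp add: algebra_simps)
qed

context bounded_coefficients
begin

lemma shifted_Lop_weighted:
  "shifted_Lop p q A z (\<lambda>i. w i *\<^sub>R g i) i =
     w i *\<^sub>R shifted_Lop p q A z g i + (\<Sum>k\<in>{- int p..int q}. A i k *v ((w i - w (i + k)) *\<^sub>R g (i + k)))"
  unfolding shifted_Lop_def Lop_def
  by (simp add: matrix_vector_mult_scaleR_right vector_smult_scaleR matrix_vector_mult_diff_distrib
      scaleR_diff_left scaleR_diff_right scaleR_sum_right sum_subtractf)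

lemma norm_weighted_commutator_le:
  assumes "\<And>k. k \<in> {- int p..int q} \<Longrightarrow> \<bar>w i - w (i + k)\<bar> \<le> \<theta> * w (i + k)"
    and "\<And>i. w i \<ge> 0"
  shows "norm (\<Sum>k\<in>{- int p..int q}. A i k *v ((w i - w (i + k)) *\<^sub>R g (i + k)))
           \<le> (\<Sum>k\<in>{- int p..int q}. M * \<theta> * norm (w (i + k) *\<^sub>R g (i + k)))"
proof (rule norm_sum[THEN order_trans], rule sum_mono)
  fix k assume "k \<in> {- int p..int q}"
  have "norm (A i k *v ((w i - w (i + k)) *\<^sub>R g (i + k))) \<le> M * (\<bar>w i - w (i + k)\<bar> * norm (g (i + k)))"
    using coeff_bound[of i k "(w i - w (i + k)) *\<^sub>R g (i + k)"] by (simp only: norm_scaleR real_norm_def)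
  also have "\<dots> \<le> M * (\<theta> * w (i + k) * norm (g (i + k)))"
    using assms(1)[OF \<open>k \<in> {- int p..int q}\<close>] M_nonneg by (intro mult_left_mono mult_right_mono) auto
  also have "\<dots> = M * \<theta> * norm (w (i + k) *\<^sub>R g (i + k))"
    using assms(2)[of "i + k"] by simp
  finally show "norm (A i k *v ((w i - w (i + k)) *\<^sub>R g (i + k))) \<le> M * \<theta> * norm (w (i + k) *\<^sub>R g (i + k))" .
qed

text \<open>The weight \<open>exp (c |i - j0|)\<close> is truncated at distance \<open>|j - j0|\<close> so that the weighted
  Green's function stays in \<open>\<ell>\<^sup>2\<close>; \<open>rate\<close> makes conjugation by it perturb \<open>z - \<L>\<close>
  by at most \<open>\<delta> / 2\<close>.\<close>
lemma combes_thomas: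
  fixes j j0 :: int and c :: real
  assumes below: "\<And>h. square_summable h \<Longrightarrow> \<delta> * l2_norm h \<le> l2_norm (shifted_Lop p q A z h)"
    and "\<delta> > 0" "c \<ge> 0"
    and rate: "card {- int p..int q} * M * (exp (c * real (p + q)) - 1) \<le> \<delta> / 2"
    and "square_summable g"
    and green: "shifted_Lop p q A z g = (\<lambda>i. if i = j0 then e else 0)"
  shows "norm (g j) \<le> 2 / \<delta> * norm e * exp (- c * \<bar>j - j0\<bar>)"
proof -
  define w where "w i = exp (c * min (nat \<bar>i - j0\<bar>) (nat \<bar>j - j0\<bar>))" for i
  define wg where "wg i = w i *\<^sub>R g i" for i
  define \<theta> where "\<theta> = exp (c * real (p + q)) - 1"
  define R where "R i = (\<Sum>k\<in>{- int p..int q}. A i k *v ((w i - w (i + k)) *\<^sub>R g (i + k)))" for i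
  have "square_summable wg"
    using square_summable_dominated[OF \<open>square_summable g\<close>, of "exp (c * nat \<bar>j - j0\<bar>)" wg] \<open>c \<ge> 0\<close>
    by (simp add: wg_def w_def mult_right_mono mult_left_mono)
  have "shifted_Lop p q A z wg = (\<lambda>i. (if i = j0 then e else 0) + R i)"
    using shifted_Lop_weighted[where p = p and q = q and z = z and w = w and g = g]
    unfolding wg_def R_def green by (auto simp: fun_eq_iff w_def)
  moreover have "norm (R i) \<le> (\<Sum>k\<in>{- int p..int q}. M * \<theta> * norm (wg (i + k)))" for i
    unfolding R_def wg_def
  proof (rule norm_weighted_commutator_le)
    show "\<bar>w i - w (i + k)\<bar> \<le> \<theta> * w (i + k)" if "k \<in> {- int p..int q}" for k
      unfolding w_def \<theta>_def
      by (rule truncated_exp_weight_diff_le[OF \<open>c \<ge> 0\<close>]) (use that in \<open>auto simp: abs_le_iff\<close>)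
  qed (simp add: w_def)
  then have "square_summable R \<and> l2_norm R \<le> card {- int p..int q} * (M * \<theta>) * l2_norm wg"
    using \<open>square_summable wg\<close> M_nonneg \<open>c \<ge> 0\<close> by (intro square_summable_band) (auto simp: \<theta>_def)
  moreover have "card {- int p..int q} * (M * \<theta>) * l2_norm wg \<le> \<delta> / 2 * l2_norm wg"
    using rate l2_norm_nonneg[of wg] by (intro mult_right_mono) (simp_all add: \<theta>_def mult.assoc)
  ultimately have "l2_norm (shifted_Lop p q A z wg) \<le> norm e + \<delta> / 2 * l2_norm wg"
    using square_summable_add[OF square_summable_delta[THEN conjunct1], of R j0 e]
      square_summable_delta[of j0 e] by fastforce
  with below[OF \<open>square_summable wg\<close>] have "l2_norm wg \<le> 2 / \<delta> * norm e"
    using \<open>\<delta> > 0\<close> by (simp add: field_simps)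
  moreover have "exp (c * \<bar>j - j0\<bar>) * norm (g j) = norm (wg j)"
    by (simp add: wg_def w_def)
  ultimately have "exp (c * \<bar>j - j0\<bar>) * norm (g j) \<le> 2 / \<delta> * norm e"
    using norm_le_l2_norm[OF \<open>square_summable wg\<close>, of j] by linarith
  then show ?thesis
    using \<open>\<delta> > 0\<close> by (simp add: exp_minus field_simps)
qed

lemma Wnorm_green_le:
  fixes j j0 :: int and c :: real
  assumes "\<And>h. square_summable h \<Longrightarrow> \<delta> * l2_norm h \<le> l2_norm (shifted_Lop p q A z h)"
    and "\<delta> > 0" "c \<ge> 0"
    and "card {- int p..int q} * M * (exp (c * real (p + q)) - 1) \<le> \<delta> / 2"
    and "square_summable g" "shifted_Lop p q A z g = (\<lambda>i. if i = j0 then e else 0)"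
  shows "Wnorm p q g j \<le> real (p + q) * exp (c * real (p + q)) * (2 / \<delta>) * norm e * exp (- c * \<bar>j - j0\<bar>)"
  using Wnorm_le_of_exp_decay[OF \<open>c \<ge> 0\<close> combes_thomas[OF assms], of p q j] by (simp only: mult.assoc)

end

section \<open>The coefficients of the linearized scheme\<close>

lemma filterlim_int_add_const_at_top: "filterlim (\<lambda>j::int. j + i) at_top at_top"
  by (rule filterlim_at_top_at_top[where Q = "\<lambda>_. True" and P = "\<lambda>_. True" and g = "\<lambda>j. j - i"]) auto

lemma tendsto_window_at_top:
  assumes "(u \<longlongrightarrow> a) at_top"
  shows "((\<lambda>j. window u j) \<longlongrightarrow> (\<lambda>_. a)) at_top"
  unfolding tendsto_fun_iff_pointwise window_def
  by (intro allI filterlim_compose[OF assms filterlim_int_add_const_at_top])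

lemma filterlim_at_bot_iff_mirror:
  "filterlim f F (at_bot :: 'a::{ordered_ab_group_add,linorder} filter) \<longleftrightarrow> filterlim (\<lambda>x. f (- x)) F at_top"
  unfolding filterlim_def at_bot_mirror filtermap_filtermap ..

lemma tendsto_window_at_bot:
  assumes "(u \<longlongrightarrow> a) at_bot"
  shows "((\<lambda>j. window u j) \<longlongrightarrow> (\<lambda>_. a)) at_bot"
proof -
  have "((\<lambda>j. u (- j)) \<longlongrightarrow> a) at_top"
    using assms by (simp add: filterlim_at_bot_iff_mirror)
  then have "((\<lambda>j. u (- (j + - i))) \<longlongrightarrow> a) at_top" for i
    by (rule filterlim_compose[OF _ filterlim_int_add_const_at_top])
  then show ?thesis
    unfolding filterlim_at_bot_iff_mirror tendsto_fun_iff_pointwise window_def by simp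
qed

lemma tendsto_at_top_of_exp_decay:
  fixes u :: "int \<Rightarrow> 'a::real_normed_vector" and c :: real
  assumes "c > 0" "\<And>j. j \<ge> 0 \<Longrightarrow> norm (u j - a) \<le> C * exp (- c * \<bar>j\<bar>)"
  shows "(u \<longlongrightarrow> a) at_top"
proof -
  have "((\<lambda>x::real. C * exp (- c * \<bar>x\<bar>)) \<longlongrightarrow> 0) at_top"
    using \<open>c > 0\<close> by real_asymp
  from filterlim_compose[OF this filterlim_real_of_int_at_top]
  have "((\<lambda>j. C * exp (- c * real_of_int \<bar>j\<bar>)) \<longlongrightarrow> 0) at_top"
    by simp
  moreover have "\<forall>\<^sub>F j in at_top. norm (u j - a) \<le> C * exp (- c * real_of_int \<bar>j\<bar>)"
    using assms(2) eventually_ge_at_top[of 0] by (rule eventually_mono[rotated])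
  ultimately have "((\<lambda>j. u j - a) \<longlongrightarrow> 0) at_top"
    by (rule Lim_null_comparison[rotated])
  then show ?thesis
    by (rule LIM_zero_cancel)
qed

lemma tendsto_at_top_at_bot_of_exp_decay:
  fixes u :: "int \<Rightarrow> 'a::real_normed_vector"
  assumes "\<exists>C (c::real). c > 0 \<and> (\<forall>j::int.
             (j \<ge> 0 \<longrightarrow> norm (u j - a) \<le> C * exp (- c * \<bar>j\<bar>)) \<and>
             (j \<le> 0 \<longrightarrow> norm (u j - b) \<le> C * exp (- c * \<bar>j\<bar>)))"
  shows "(u \<longlongrightarrow> a) at_top" "(u \<longlongrightarrow> b) at_bot"
proof -
  obtain C c :: real where "c > 0"
    and decay_a: "\<And>j. j \<ge> 0 \<Longrightarrow> norm (u j - a) \<le> C * exp (- c * \<bar>j\<bar>)"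
    and decay_b: "\<And>j. j \<le> 0 \<Longrightarrow> norm (u j - b) \<le> C * exp (- c * \<bar>j\<bar>)"
    using assms by blast
  show "(u \<longlongrightarrow> a) at_top"
    using \<open>c > 0\<close> decay_a by (rule tendsto_at_top_of_exp_decay)
  show "(u \<longlongrightarrow> b) at_bot"
    unfolding filterlim_at_bot_iff_mirror
  proof (rule tendsto_at_top_of_exp_decay[OF \<open>c > 0\<close>])
    show "norm (u (- j) - b) \<le> C * exp (- c * \<bar>j\<bar>)" if "j \<ge> 0" for j
      using decay_b[of "- j"] that by simp
  qed
qed

lemma bounded_range_of_tendsto_at_top_at_bot:
  fixes X :: "int \<Rightarrow> 'a::metric_space"
  assumes "(X \<longlongrightarrow> a) at_top" "(X \<longlongrightarrow> b) at_bot"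
  shows "bounded (range X)"
proof -
  obtain N where N: "\<And>j. j \<ge> N \<Longrightarrow> X j \<in> ball a 1"
    using assms(1)[THEN tendstoD, of 1] by (auto simp: eventually_at_top_linorder dist_commute)
  obtain M where M: "\<And>j. j \<le> M \<Longrightarrow> X j \<in> ball b 1"
    using assms(2)[THEN tendstoD, of 1] by (auto simp: eventually_at_bot_linorder dist_commute)
  have "X j \<in> ball a 1 \<union> ball b 1 \<union> X ` {M..N}" for j
    using N[of j] M[of j] by (cases "N \<le> j"; cases "j \<le> M") auto
  then have "range X \<subseteq> ball a 1 \<union> ball b 1 \<union> X ` {M..N}"
    by (rule image_subsetI)
  moreover have "bounded (ball a 1 \<union> ball b 1 \<union> X ` {M..N})"
    by (simp add: finite_imp_bounded)
  ultimately show ?thesis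
    by (rule bounded_subset[rotated])
qed

lemma Bprof_bounded:
  fixes F :: "real \<Rightarrow> (int \<Rightarrow> real^'d::finite) \<Rightarrow> real^'d"
  assumes cont: "\<forall>k\<in>{- int p..int q - 1}.
      continuous_on {u. \<forall>i\<in>{- int p..int q - 1}. u i \<in> V} (\<lambda>u. pderiv_slot F \<nu> u k)"
    and "\<forall>j. ub j \<in> V" "um \<in> V" "up \<in> V"
    and "(ub \<longlongrightarrow> up) at_top" "(ub \<longlongrightarrow> um) at_bot"
  shows "\<exists>B>0. \<forall>j. \<forall>k\<in>{- int p..int q - 1}. norm (Bprof F \<nu> ub j k) \<le> B"
proof -
  define S where "S = {u. \<forall>i\<in>{- int p..int q - 1}. u i \<in> V}"
  have windows: "\<forall>\<^sub>F j in F'. window ub j \<in> S" for F'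
    using assms(2) by (simp add: S_def window_def)
  have "(\<lambda>_. up) \<in> S" "(\<lambda>_. um) \<in> S"
    using assms(3,4) by (simp_all add: S_def)
  have "bounded (range (\<lambda>j. Bprof F \<nu> ub j k))" if "k \<in> {- int p..int q - 1}" for k
  proof (rule bounded_range_of_tendsto_at_top_at_bot)
    have "continuous_on S (\<lambda>u. pderiv_slot F \<nu> u k)"
      using cont that by (simp add: S_def)
    note limit = continuous_on_tendsto_compose[OF this]
    show "((\<lambda>j. Bprof F \<nu> ub j k) \<longlongrightarrow> \<nu> *\<^sub>R pderiv_slot F \<nu> (\<lambda>_. up) k) at_top"
      unfolding Bprof_def using limit[OF tendsto_window_at_top[OF assms(5)] \<open>(\<lambda>_. up) \<in> S\<close> windows]
      by (rule tendsto_scaleR[OF tendsto_const])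
    show "((\<lambda>j. Bprof F \<nu> ub j k) \<longlongrightarrow> \<nu> *\<^sub>R pderiv_slot F \<nu> (\<lambda>_. um) k) at_bot"
      unfolding Bprof_def using limit[OF tendsto_window_at_bot[OF assms(6)] \<open>(\<lambda>_. um) \<in> S\<close> windows]
      by (rule tendsto_scaleR[OF tendsto_const])
  qed
  then have "bounded (\<Union>k\<in>{- int p..int q - 1}. range (\<lambda>j. Bprof F \<nu> ub j k))"
    by (intro bounded_UN) auto
  then show ?thesis
    unfolding bounded_pos by auto
qed

lemma norm_Acoef_le:
  fixes B :: "int \<Rightarrow> int \<Rightarrow> real^'d::finite^'d"
  assumes "p + q > 0" and bound: "\<And>j k. k \<in> {- int p..int q - 1} \<Longrightarrow> norm (B j k) \<le> b" and "0 \<le> b"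
  shows "norm (Acoef p q B j k) \<le> norm (mat 1 :: real^'d^'d) + 2 * b"
proof -
  consider "k = int q" | "k = - int p" "k \<noteq> int q" | "- int p < k" "k < int q" | "k < - int p \<or> k > int q"
    by linarith
  then show ?thesis
  proof cases
    case 1
    then show ?thesis
      using bound[of "int q - 1" "j + 1"] \<open>p + q > 0\<close> \<open>0 \<le> b\<close> by (simp add: Acoef_def add_increasing)
  next
    case 2
    then show ?thesis
      using bound[of "- int p" j] \<open>p + q > 0\<close> \<open>0 \<le> b\<close> by (auto simp: Acoef_def add_increasing)
  next
    case 3
    then have "norm (Acoef p q B j k)
        \<le> norm (if k = 0 then mat 1 else 0 :: real^'d^'d) + norm (B j k) + norm (B (j + 1) (k - 1))"
      by (simp add: Acoef_def norm_triangle_le_diff norm_triangle_le)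
    also have "\<dots> \<le> norm (mat 1 :: real^'d^'d) + b + b"
      using 3 bound[of k j] bound[of "k - 1" "j + 1"] by (intro add_mono) auto
    finally show ?thesis
      by simp
  next
    case 4
    then show ?thesis
      using \<open>0 \<le> b\<close> by (auto simp: Acoef_def)
  qed
qed

lemma norm_cmat_entry_le: "norm (cmat X $ i $ j) \<le> norm X"
  unfolding cmat_def using component_le_norm_cart[of "X $ i" j] Finite_Cartesian_Product.norm_nth_le[of X i]
  by simp

lemma bounded_coefficients_linearization:
  fixes F :: "real \<Rightarrow> (int \<Rightarrow> real^'d::finite) \<Rightarrow> real^'d"
  assumes "p + q > 0"
    and "\<forall>k\<in>{- int p..int q - 1}.
      continuous_on {u. \<forall>i\<in>{- int p..int q - 1}. u i \<in> V} (\<lambda>u. pderiv_slot F \<nu> u k)"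
    and "\<forall>j. ub j \<in> V" "um \<in> V" "up \<in> V"
    and "(ub \<longlongrightarrow> up) at_top" "(ub \<longlongrightarrow> um) at_bot"
  shows "\<exists>M. bounded_coefficients (\<lambda>j k. cmat (Acoef p q (Bprof F \<nu> ub) j k)) M"
proof -
  obtain b where "b > 0" and b: "\<forall>j. \<forall>k\<in>{- int p..int q - 1}. norm (Bprof F \<nu> ub j k) \<le> b"
    using Bprof_bounded[OF assms(2-7)] by blast
  have "norm (cmat (Acoef p q (Bprof F \<nu> ub) j k) $ i $ i') \<le> norm (mat 1 :: real^'d^'d) + 2 * b"
    for j k i i'
    using assms(1) b \<open>b > 0\<close> by (intro order_trans[OF norm_cmat_entry_le norm_Acoef_le]) auto
  then have "bounded_coefficients (\<lambda>j k. cmat (Acoef p q (Bprof F \<nu> ub) j k))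
      (real CARD('d) * real CARD('d) * (norm (mat 1 :: real^'d^'d) + 2 * b))"
    using \<open>b > 0\<close> by (intro bounded_coefficients.intro norm_matrix_vector_mult_le) simp_all
  then show ?thesis
    by blast
qed

theorem proposition3p9:
  fixes p q \<mu> :: nat and \<nu> :: real
    and F :: "real \<Rightarrow> (int \<Rightarrow> real^'d::finite) \<Rightarrow> real^'d"
    and f :: "real^'d \<Rightarrow> real^'d"
    and V :: "(real^'d) set"
    and ub :: "int \<Rightarrow> real^'d" and um up :: "real^'d"
    and G :: "complex \<Rightarrow> int \<Rightarrow> int \<Rightarrow> complex^'d^'d"
    and U :: "complex set"
  assumes p1: "p \<ge> 1" and q1: "q \<ge> 1" and nu: "\<nu> > 0" and V_open: "open V"
    and F_local: "\<forall>u v. (\<forall>k\<in>{- int p..int q - 1}. u k = v k) \<longrightarrow> F \<nu> u = F \<nu> v"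
    and F_diff: "\<forall>u. (\<forall>k\<in>{- int p..int q - 1}. u k \<in> V) \<longrightarrow>
                   (\<forall>k\<in>{- int p..int q - 1}. (\<lambda>v. F \<nu> (u(k := v))) differentiable (at (u k)))"
    and F_C1: "\<forall>k\<in>{- int p..int q - 1}.
                 continuous_on {u. \<forall>i\<in>{- int p..int q - 1}. u i \<in> V} (\<lambda>u. pderiv_slot F \<nu> u k)"
    and consistent: "\<forall>u\<in>V. F \<nu> (\<lambda>_. u) = f u"
    and f_diff: "\<forall>u\<in>V. f differentiable (at u)"
    and f_diag: "\<forall>u\<in>V. \<exists>(P::real^'d^'d) D. invertible P \<and> matrix_inv P ** jacobian f (at u) ** P = diagm D"
    and ub_V: "\<forall>j. ub j \<in> V" and um_V: "um \<in> V" and up_V: "up \<in> V"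
    and ub_fix: "scheme F \<nu> ub = ub"
    and ub_lim: "\<exists>C (c::real). c > 0 \<and> (\<forall>j::int.
                    (j \<ge> 0 \<longrightarrow> norm (ub j - up) \<le> C * exp (- c * \<bar>j\<bar>)) \<and>
                    (j \<le> 0 \<longrightarrow> norm (ub j - um) \<le> C * exp (- c * \<bar>j\<bar>)))"
    and commute: "\<forall>s\<in>{um, up}. \<forall>k\<in>{- int p..int q - 1}.
                    jacobian f (at s) ** Bconst F \<nu> s 0 k = Bconst F \<nu> s 0 k ** jacobian f (at s)"
    and mu1: "\<mu> \<ge> 1"
    and symbol: "\<forall>s\<in>{um, up}. \<exists>P D (lam :: 'd \<Rightarrow> int \<Rightarrow> real) (\<alpha> :: 'd \<Rightarrow> real) (\<beta> :: 'd \<Rightarrow> complex).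
         invertible P \<and> matrix_inv P ** jacobian f (at s) ** P = diagm D \<and>
         (\<forall>k\<in>{- int p..int q}. matrix_inv P ** Acoef p q (Bconst F \<nu> s) 0 k ** P = diagm (\<lambda>l. lam l k)) \<and>
         (\<forall>l. \<alpha> l \<noteq> 0 \<and> Re (\<beta> l) > 0 \<and>
            (\<forall>\<kappa>. cmod \<kappa> = 1 \<and> \<kappa> \<noteq> 1 \<longrightarrow> cmod (Fsym p q (lam l) \<kappa>) < 1) \<and>
            (\<exists>\<delta> > 0. \<exists>K. \<forall>\<xi>::real. \<bar>\<xi>\<bar> < \<delta> \<longrightarrow>
               (\<exists>w. Fsym p q (lam l) (cis \<xi>) = exp w \<and>
                    cmod (w - (- \<i> * complex_of_real (\<alpha> l) * complex_of_real \<xi>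
                               - \<beta> l * complex_of_real (\<xi> ^ (2 * \<mu>))))
                      \<le> K * \<bar>\<xi>\<bar> ^ (2 * \<mu> + 1))))"
    and A_inv: "\<forall>j. invertible (Acoef p q (Bprof F \<nu> ub) j (- int p)) \<and>
                    invertible (Acoef p q (Bprof F \<nu> ub) j (int q))"
    and Apm_inv: "\<forall>s\<in>{um, up}. invertible (Acoef p q (Bconst F \<nu> s) 0 (- int p)) \<and>
                    invertible (Acoef p q (Bconst F \<nu> s) 0 (int q))"
    and Green: "\<forall>z \<in> unbounded_component
                       (- (spectrum_op p q (\<lambda>j k. cmat (Acoef p q (Bconst F \<nu> up) j k))
                         \<union> spectrum_op p q (\<lambda>j k. cmat (Acoef p q (Bconst F \<nu> um) j k))))
                    \<inter> resolvent_set p q (\<lambda>j k. cmat (Acoef p q (Bprof F \<nu> ub) j k)).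
                 \<forall>j0 e. l2 (\<lambda>j. G z j0 j *v e) \<and>
                   (\<forall>j. z *s (G z j0 j *v e)
                        - Lop p q (\<lambda>j k. cmat (Acoef p q (Bprof F \<nu> ub) j k)) (\<lambda>m. G z j0 m *v e) j
                        = (if j = j0 then e else 0))"
    and U_open: "open U" and U_bdd: "bounded U"
    and U_sub: "closure U \<subseteq> unbounded_component
                       (- (spectrum_op p q (\<lambda>j k. cmat (Acoef p q (Bconst F \<nu> up) j k))
                         \<union> spectrum_op p q (\<lambda>j k. cmat (Acoef p q (Bconst F \<nu> um) j k))))
                    \<inter> resolvent_set p q (\<lambda>j k. cmat (Acoef p q (Bprof F \<nu> ub) j k))"
  shows "\<exists>C c. C > 0 \<and> c > 0 \<and>
           (\<forall>z\<in>U. \<forall>e j j0. Wnorm p q (\<lambda>m. G z j0 m *v e) j \<le> C * norm e * exp (- c * \<bar>j - j0\<bar>))"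
proof -
  define A where "A = (\<lambda>j k. cmat (Acoef p q (Bprof F \<nu> ub) j k))"
  from tendsto_at_top_at_bot_of_exp_decay[OF ub_lim]
  obtain M where "bounded_coefficients A M"
    using bounded_coefficients_linearization[OF _ F_C1 ub_V um_V up_V] p1 unfolding A_def by auto
  then interpret bounded_coefficients A M .
  have "compact (closure U)" "closure U \<subseteq> resolvent_set p q A"
    using U_bdd U_sub by (simp_all add: compact_closure A_def)
  then obtain \<delta> where "\<delta> > 0"
    and below: "\<forall>z\<in>closure U. \<forall>h. square_summable h \<longrightarrow> \<delta> * l2_norm h \<le> l2_norm (shifted_Lop p q A z h)"
    by (metis shifted_Lop_uniformly_bounded_below)
  obtain c where "c > 0" and rate: "card {- int p..int q} * M * (exp (c * real (p + q)) - 1) \<le> \<delta> / 2"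
    using small_exponential_rate[of "\<delta> / 2"] \<open>\<delta> > 0\<close> by auto
  define C where "C = real (p + q) * exp (c * real (p + q)) * (2 / \<delta>)"
  have "Wnorm p q (\<lambda>m. G z j0 m *v e) j \<le> C * norm e * exp (- c * \<bar>j - j0\<bar>)"
    if "z \<in> U" for z e j j0
  proof (unfold C_def, rule Wnorm_green_le[OF _ \<open>\<delta> > 0\<close> less_imp_le[OF \<open>c > 0\<close>] rate])
    have "z \<in> closure U"
      using that closure_subset by blast
    then show "\<delta> * l2_norm h \<le> l2_norm (shifted_Lop p q A z h)" if "square_summable h" for h
      using below that by blast
    from Green[rule_format, OF subsetD[OF U_sub \<open>z \<in> closure U\<close>], of j0 e]
    show "square_summable (\<lambda>m. G z j0 m *v e)"
      and "shifted_Lop p q A z (\<lambda>m. G z j0 m *v e) = (\<lambda>i. if i = j0 then e else 0)"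
      unfolding A_def shifted_Lop_def l2_iff_square_summable by (auto simp: fun_eq_iff)
  qed
  moreover have "C > 0"
    unfolding C_def using p1 \<open>\<delta> > 0\<close> by simp
  ultimately show ?thesis
    using \<open>c > 0\<close> by (intro exI[of _ C] exI[of _ c]) auto
qed

end
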